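(* Let $(M,\nabla_0)$ be a hom-connection with respect to a differential graded algebra $\Omega A$, with extensions $\nabla_n:\mathrm{Hom}_A(\Omega^{n+1}A,M)\to\mathrm{Hom}_A(\Omega^nA,M)$, $\nabla_n(f)(\omega)=\nabla_0(f\omega)+(-1)^{n+1}f(d\omega)$. Then for all $n>0$: (a) $\nabla_{n-1}\circ\nabla_n:\mathrm{Hom}_A(\Omega^{n+1}A,M)\to\mathrm{Hom}_A(\Omega^{n-1}A,M)$ is right $A$-linear; (b) with $F=\nabla_0\circ\nabla_1:\mathrm{Hom}_A(\Omega^2A,M)\to M$ and $\Theta_n:\mathrm{Hom}_A(\Omega^{n+1}A,M)\to\mathrm{Hom}_A(\Omega^{n-1}A,\mathrm{Hom}_A(\Omega^2A,M))$ defined by $\Theta_n(f)(\omega_1)(\omega_2)=f(\omega_1\omega_2)$, one has $$\nabla_{n-1}\circ\nabla_n=\mathrm{Hom}_A(\Omega^{n-1}A,F)\circ\Theta_n,$$ i.e. $(\nabla_{n-1}\circ\nabla_n)(f)(\omega_1)=F(\Theta_n(f)(\omega_1))$ for all $f$ and $\omega_1\in\Omega^{n-1}A$.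
   Context: All algebras are associative and unital over a field $k$. $\Omega A=\bigoplus_{n\ge0}\Omega^nA$, $\Omega^0A=A$, is a differential graded algebra with degree-one differential $d$, $d^2=0$, satisfying the graded Leibniz rule. $M$ is a right $A$-module; $\mathrm{Hom}_A$ denotes right $A$-linear maps; $\mathrm{Hom}_A(\Omega^kA,M)$ is a right $A$-module via $(fa)(\omega)=f(a\omega)$, and $\mathrm{Hom}_A(A,M)\cong M$ via $f\mapsto f(1)$. For $\omega\in\Omega^nA$ and $f\in\mathrm{Hom}_A(\Omega^{n+m}A,M)$, $f\omega\in\mathrm{Hom}_A(\Omega^mA,M)$ is $(f\omega)(\omega')=f(\omega\omega')$. A hom-connection is a $k$-linear map $\nabla_0:\mathrm{Hom}_A(\Omega^1A,M)\to M$ with $\nabla_0(fa)=\nabla_0(f)a+f(da)$ for all $f$ and $a\in A$. *)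

theory Defs
  imports Main
begin

text \<open>The total DGA \<Omega>A is modelled as a ring type 'w (associative, unital),
  which is a 'k-algebra via the scalar action sw, together with a grading
  Om n (the homogeneous component of degree n, a k-subspace) and a differential d.
  A = Om 0.  M is an abelian group 'm with a right A-action act; its k-structure
  is the one induced by k -> A, c |-> sw c 1.\<close>

definition k_algebra :: "('k::field \<Rightarrow> 'w::ring_1 \<Rightarrow> 'w) \<Rightarrow> bool" where
  "k_algebra sw \<longleftrightarrow>
     (\<forall>c x y. sw c (x + y) = sw c x + sw c y) \<and>
     (\<forall>c e x. sw (c + e) x = sw c x + sw e x) \<and>
     (\<forall>c e x. sw (c * e) x = sw c (sw e x)) \<and>
     (\<forall>x. sw 1 x = x) \<and>
     (\<forall>c x y. sw c (x * y) = sw c x * y) \<and>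
     (\<forall>c x y. sw c (x * y) = x * sw c y)"

definition dga :: "('k::field \<Rightarrow> 'w::ring_1 \<Rightarrow> 'w) \<Rightarrow> (nat \<Rightarrow> 'w set) \<Rightarrow> ('w \<Rightarrow> 'w) \<Rightarrow> bool" where
  "dga sw Om d \<longleftrightarrow>
     k_algebra sw \<and>
     \<comment> \<open>each Om n is a k-subspace\<close>
     (\<forall>n. 0 \<in> Om n \<and> (\<forall>x\<in>Om n. \<forall>y\<in>Om n. x + y \<in> Om n) \<and> (\<forall>c. \<forall>x\<in>Om n. sw c x \<in> Om n)) \<and>
     \<comment> \<open>\<Omega>A is the direct sum of the Om n\<close>
     (\<forall>w. \<exists>N x. (\<forall>i. x i \<in> Om i) \<and> w = (\<Sum>i<N. x i)) \<and>
     (\<forall>N x. (\<forall>i. x i \<in> Om i) \<longrightarrow> (\<Sum>i<N. x i) = 0 \<longrightarrow> (\<forall>i<N. x i = 0)) \<and>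
     \<comment> \<open>graded algebra\<close>
     1 \<in> Om 0 \<and>
     (\<forall>m n. \<forall>x\<in>Om m. \<forall>y\<in>Om n. x * y \<in> Om (m + n)) \<and>
     \<comment> \<open>degree-one k-linear differential, d^2 = 0, graded Leibniz rule\<close>
     (\<forall>x y. d (x + y) = d x + d y) \<and>
     (\<forall>c x. d (sw c x) = sw c (d x)) \<and>
     (\<forall>n. \<forall>x\<in>Om n. d x \<in> Om (Suc n)) \<and>
     (\<forall>x. d (d x) = 0) \<and>
     (\<forall>n. \<forall>x\<in>Om n. \<forall>y. d (x * y) = d x * y + (-1) ^ n * (x * d y))"

definition right_module :: "(nat \<Rightarrow> 'w::ring_1 set) \<Rightarrow> ('m::ab_group_add \<Rightarrow> 'w \<Rightarrow> 'm) \<Rightarrow> bool" where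
  "right_module Om act \<longleftrightarrow>
     (\<forall>m m'. \<forall>a\<in>Om 0. act (m + m') a = act m a + act m' a) \<and>
     (\<forall>m. \<forall>a\<in>Om 0. \<forall>b\<in>Om 0. act m (a + b) = act m a + act m b) \<and>
     (\<forall>m. \<forall>a\<in>Om 0. \<forall>b\<in>Om 0. act m (a * b) = act (act m a) b) \<and>
     (\<forall>m. act m 1 = m)"

text \<open>Hom_A(Om k, M): right A-linear maps Om k -> M, represented as functions
  on \<Omega>A vanishing outside Om k.\<close>
definition hom :: "(nat \<Rightarrow> 'w::ring_1 set) \<Rightarrow> ('m::ab_group_add \<Rightarrow> 'w \<Rightarrow> 'm) \<Rightarrow> nat \<Rightarrow> ('w \<Rightarrow> 'm) \<Rightarrow> bool" where
  "hom Om act k f \<longleftrightarrow>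
     (\<forall>x\<in>Om k. \<forall>y\<in>Om k. f (x + y) = f x + f y) \<and>
     (\<forall>x\<in>Om k. \<forall>a\<in>Om 0. f (x * a) = act (f x) a) \<and>
     (\<forall>x. x \<notin> Om k \<longrightarrow> f x = 0)"

text \<open>For f in Hom_A(Om (j+k), M) and w in Om j: (f w)(w') = f (w w'), w' in Om k.
  With j = 0 this is the right A-module structure (f a)(w') = f (a w').\<close>
definition hcomp :: "(nat \<Rightarrow> 'w::ring_1 set) \<Rightarrow> nat \<Rightarrow> ('w \<Rightarrow> 'm::zero) \<Rightarrow> 'w \<Rightarrow> ('w \<Rightarrow> 'm)" where
  "hcomp Om k f w = (\<lambda>w'. if w' \<in> Om k then f (w * w') else 0)"

definition hom_connection ::
  "('k::field \<Rightarrow> 'w::ring_1 \<Rightarrow> 'w) \<Rightarrow> (nat \<Rightarrow> 'w set) \<Rightarrow> ('w \<Rightarrow> 'w) \<Rightarrow>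
   ('m::ab_group_add \<Rightarrow> 'w \<Rightarrow> 'm) \<Rightarrow> (('w \<Rightarrow> 'm) \<Rightarrow> 'm) \<Rightarrow> bool" where
  "hom_connection sw Om d act nabla0 \<longleftrightarrow>
     dga sw Om d \<and> right_module Om act \<and>
     \<comment> \<open>k-linearity of nabla0 on Hom_A(Om 1, M)\<close>
     (\<forall>f g. hom Om act 1 f \<longrightarrow> hom Om act 1 g \<longrightarrow>
        nabla0 (\<lambda>x. f x + g x) = nabla0 f + nabla0 g) \<and>
     (\<forall>f c. hom Om act 1 f \<longrightarrow>
        nabla0 (\<lambda>x. act (f x) (sw c 1)) = act (nabla0 f) (sw c 1)) \<and>
     \<comment> \<open>hom-connection Leibniz rule\<close>
     (\<forall>f. hom Om act 1 f \<longrightarrow> (\<forall>a\<in>Om 0. nabla0 (hcomp Om 1 f a) = act (nabla0 f) a + f (d a)))"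

definition sgnm :: "nat \<Rightarrow> 'm::ab_group_add \<Rightarrow> 'm" where
  "sgnm p x = (if even p then x else - x)"

text \<open>The extensions nabla_n : Hom_A(Om (n+1), M) -> Hom_A(Om n, M).
  nabla_0 is nabla0 under the identification Hom_A(A,M) = M; for n > 0,
  nabla_n(f)(w) = nabla0 (f w) + (-1)^(n+1) f (d w).\<close>
fun nabla_ext :: "(nat \<Rightarrow> 'w::ring_1 set) \<Rightarrow> ('w \<Rightarrow> 'w) \<Rightarrow> ('m::ab_group_add \<Rightarrow> 'w \<Rightarrow> 'm) \<Rightarrow>
    (('w \<Rightarrow> 'm) \<Rightarrow> 'm) \<Rightarrow> nat \<Rightarrow> ('w \<Rightarrow> 'm) \<Rightarrow> ('w \<Rightarrow> 'm)" where
  "nabla_ext Om d act nabla0 0 f = (\<lambda>a. if a \<in> Om 0 then act (nabla0 f) a else 0)"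
| "nabla_ext Om d act nabla0 (Suc n) f =
     (\<lambda>w. if w \<in> Om (Suc n) then nabla0 (hcomp Om 1 f w) + sgnm (Suc n + 1) (f (d w)) else 0)"

definition Theta :: "(nat \<Rightarrow> 'w::ring_1 set) \<Rightarrow> nat \<Rightarrow> ('w \<Rightarrow> 'm::zero) \<Rightarrow> 'w \<Rightarrow> ('w \<Rightarrow> 'm)" where
  "Theta Om n f = (\<lambda>w1. if w1 \<in> Om (n - 1) then hcomp Om 2 f w1 else (\<lambda>_. 0))"

definition curv :: "(nat \<Rightarrow> 'w::ring_1 set) \<Rightarrow> ('w \<Rightarrow> 'w) \<Rightarrow> ('m::ab_group_add \<Rightarrow> 'w \<Rightarrow> 'm) \<Rightarrow>
    (('w \<Rightarrow> 'm) \<Rightarrow> 'm) \<Rightarrow> ('w \<Rightarrow> 'm) \<Rightarrow> 'm" where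
  "curv Om d act nabla0 g = nabla0 (nabla_ext Om d act nabla0 1 g)"

end

theory Submission
  imports Defs
begin

text \<open>
  Write \<open>\<nabla>_n\<close> for the extensions and \<open>f w\<close> for \<open>hcomp\<close>. Every extension satisfies
  \<open>\<nabla>_n(f)(w) = \<nabla>_0(f w) + (-1)^(n+1) f(dw)\<close>, for \<open>n = 0\<close> by the Leibniz rule of \<open>\<nabla>_0\<close>.
  With the graded Leibniz rule of \<open>d\<close> this gives, for \<open>w\<close> of degree \<open>j\<close>, the commutation
  rule \<open>\<nabla>_(j+k)(f) w = \<nabla>_k(f w) + (-1)^(j+k+1) f dw\<close>. For \<open>w = a\<close> in \<open>A\<close> it is a twisted
  Leibniz rule \<open>\<nabla>_k(f a) = \<nabla>_k(f) a + (-1)^k f da\<close>; applying it twice to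
  \<open>\<nabla>_(n-1)\<nabla>_n(f a)\<close>, the two terms involving \<open>f da\<close> occur with opposite signs and cancel
  because \<open>da\<close> is closed. For \<open>k = 1\<close> and \<open>w = \<omega>\<close> it rewrites \<open>\<nabla>_(n-1)\<nabla>_n(f)(\<omega>)\<close> as
  \<open>\<nabla>_0\<nabla>_1(f \<omega>)\<close> plus two copies of \<open>\<nabla>_0(f d\<omega>)\<close> of opposite sign.
\<close>

lemma sgnm_0 [simp]: "sgnm 0 x = x"
  by (simp add: sgnm_def)

lemma sgnm_Suc [simp]: "sgnm (Suc p) x = - sgnm p x"
  by (simp add: sgnm_def)

lemma sgnm_zero [simp]: "sgnm p 0 = 0"
  by (simp add: sgnm_def)

lemma sgnm_add: "sgnm p (x + y) = sgnm p x + sgnm p y"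
  by (simp add: sgnm_def)

lemma sgnm_diff: "sgnm p (x - y) = sgnm p x - sgnm p y"
  by (simp add: sgnm_def)

lemma sgnm_sgnm: "sgnm p (sgnm q x) = sgnm (p + q) x"
  by (auto simp: sgnm_def)

locale hom_conn =
  fixes sw :: "'k::field \<Rightarrow> 'w::ring_1 \<Rightarrow> 'w"
    and Om :: "nat \<Rightarrow> 'w set"
    and d :: "'w \<Rightarrow> 'w"
    and act :: "'m::ab_group_add \<Rightarrow> 'w \<Rightarrow> 'm"
    and nabla0 :: "('w \<Rightarrow> 'm) \<Rightarrow> 'm"
  assumes hom_connection: "hom_connection sw Om d act nabla0"
begin

abbreviation "nabla \<equiv> nabla_ext Om d act nabla0"
abbreviation "Hom \<equiv> hom Om act"

lemma dga: "dga sw Om d"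
  using hom_connection by (simp add: hom_connection_def)

lemma right_module: "right_module Om act"
  using hom_connection by (simp add: hom_connection_def)

lemma Om_zero [simp]: "0 \<in> Om n"
  and Om_add: "x \<in> Om n \<Longrightarrow> y \<in> Om n \<Longrightarrow> x + y \<in> Om n"
  and Om_mult: "x \<in> Om i \<Longrightarrow> y \<in> Om j \<Longrightarrow> x * y \<in> Om (i + j)"
  and d_Om: "x \<in> Om n \<Longrightarrow> d x \<in> Om (Suc n)"
  and d_add: "d (x + y) = d x + d y"
  and d_d [simp]: "d (d x) = 0"
  and d_mult: "x \<in> Om n \<Longrightarrow> d (x * y) = d x * y + (-1) ^ n * (x * d y)"
  using dga by (simp_all add: dga_def)

text \<open>The graded pieces are only assumed closed under scalars; negation is the scalar \<open>-1\<close>.\<close>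

lemma sw_minus_one: "sw (-1) x = - x"
proof -
  have sw_add: "sw (c + e) x = sw c x + sw e x" for c e
    using dga by (simp add: dga_def k_algebra_def)
  have "sw 0 x = 0"
    using sw_add[of 0 0] by simp
  moreover have "sw 1 x = x"
    using dga by (simp add: dga_def k_algebra_def)
  ultimately show ?thesis
    using sw_add[of "-1" 1] by (simp add: eq_neg_iff_add_eq_0)
qed

lemma Om_uminus: "x \<in> Om n \<Longrightarrow> - x \<in> Om n"
  using dga sw_minus_one[of x] unfolding dga_def by metis

lemma Om_sign_mult: "x \<in> Om n \<Longrightarrow> (-1) ^ p * x \<in> Om n"
  by (cases "even p") (simp_all add: Om_uminus)

lemma act_add: "a \<in> Om 0 \<Longrightarrow> act (m + m') a = act m a + act m' a"
  using right_module by (simp add: right_module_def)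

lemma act_zero: "a \<in> Om 0 \<Longrightarrow> act 0 a = 0"
  using act_add[of a 0 0] by simp

lemma act_sgnm: "a \<in> Om 0 \<Longrightarrow> act (sgnm p m) a = sgnm p (act m a)"
  using act_add[of a m "- m"] act_zero[of a]
  by (auto simp: sgnm_def eq_neg_iff_add_eq_0 add.commute)

lemma hom_add: "Hom k f \<Longrightarrow> x \<in> Om k \<Longrightarrow> y \<in> Om k \<Longrightarrow> f (x + y) = f x + f y"
  and hom_act: "Hom k f \<Longrightarrow> x \<in> Om k \<Longrightarrow> a \<in> Om 0 \<Longrightarrow> f (x * a) = act (f x) a"
  by (simp_all add: hom_def)

lemma hom_zero [simp]: "Hom k f \<Longrightarrow> f 0 = 0"
  using hom_add[of k f 0 0] by simp

lemma hom_sign_mult: "Hom k f \<Longrightarrow> x \<in> Om k \<Longrightarrow> f ((-1) ^ p * x) = sgnm p (f x)"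
  using hom_add[of k f x "- x"] Om_uminus[of x k]
  by (cases "even p") (auto simp: sgnm_def eq_neg_iff_add_eq_0 add.commute)

lemma hom_plus: "Hom k f \<Longrightarrow> Hom k g \<Longrightarrow> Hom k (\<lambda>x. f x + g x)"
  unfolding hom_def by (auto simp: act_add algebra_simps)

lemma hom_sgnm: "Hom k f \<Longrightarrow> Hom k (\<lambda>x. sgnm p (f x))"
  unfolding hom_def by (auto simp: act_sgnm sgnm_add)

lemma hom_hcomp: "Hom (j + k) f \<Longrightarrow> w \<in> Om j \<Longrightarrow> Hom k (hcomp Om k f w)"
proof -
  assume f: "Hom (j + k) f" and w: "w \<in> Om j"
  have "x * a \<in> Om k" if "x \<in> Om k" "a \<in> Om 0" for x a
    using Om_mult[OF that] by simp
  with f w show ?thesis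
    unfolding hom_def hcomp_def
    by (auto simp: distrib_left Om_add Om_mult mult.assoc[symmetric] hom_add hom_act)
qed

lemma hcomp_hcomp: "w \<in> Om j \<Longrightarrow> hcomp Om k (hcomp Om (j + k) f x) w = hcomp Om k f (x * w)"
  unfolding hcomp_def by (auto simp: Om_mult mult.assoc)

lemma hcomp_plus: "hcomp Om k (\<lambda>x. (f :: 'w \<Rightarrow> 'm) x + g x) w = (\<lambda>x. hcomp Om k f w x + hcomp Om k g w x)"
  unfolding hcomp_def by (auto simp: fun_eq_iff)

lemma hcomp_sgnm: "hcomp Om k (\<lambda>x. sgnm p ((f :: 'w \<Rightarrow> 'm) x)) w = (\<lambda>x. sgnm p (hcomp Om k f w x))"
  unfolding hcomp_def by (auto simp: fun_eq_iff)

lemma hcomp_zero: "Hom i f \<Longrightarrow> hcomp Om k f 0 = (\<lambda>x. 0)"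
  unfolding hcomp_def by auto

lemma nabla0_add: "Hom 1 f \<Longrightarrow> Hom 1 g \<Longrightarrow> nabla0 (\<lambda>x. f x + g x) = nabla0 f + nabla0 g"
  and nabla0_hcomp: "Hom 1 f \<Longrightarrow> a \<in> Om 0 \<Longrightarrow> nabla0 (hcomp Om 1 f a) = act (nabla0 f) a + f (d a)"
  using hom_connection by (simp_all add: hom_connection_def)

lemma nabla0_sgnm:
  assumes f: "Hom 1 f"
  shows "nabla0 (\<lambda>x. sgnm p (f x)) = sgnm p (nabla0 f)"
proof -
  have "Hom 1 (\<lambda>x. 0)"
    by (simp add: hom_def act_zero)
  then have zero: "nabla0 (\<lambda>x. 0) = 0"
    using nabla0_add[of "\<lambda>x. 0" "\<lambda>x. 0"] by simp
  from f have "nabla0 f + nabla0 (\<lambda>x. - f x) = 0"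
    using nabla0_add[of f "\<lambda>x. - f x"] hom_sgnm[of 1 f 1] zero by simp
  then show ?thesis
    by (simp add: sgnm_def eq_neg_iff_add_eq_0 add.commute)
qed

text \<open>In degree \<open>0\<close> this is the Leibniz rule of \<open>nabla0\<close>, so the defining
  formula of the extensions holds uniformly in \<open>n\<close>.\<close>

lemma nabla_ext_apply:
  assumes f: "Hom (Suc n) f" and w: "w \<in> Om n"
  shows "nabla n f w = nabla0 (hcomp Om 1 f w) + sgnm (Suc n) (f (d w))"
proof (cases n)
  case 0
  then show ?thesis
    using nabla0_hcomp[of f w] f w by simp
qed (use w in simp)

lemma nabla_ext_out: "w \<notin> Om n \<Longrightarrow> nabla n f w = 0"
  by (cases n) simp_all

declare nabla_ext.simps [simp del]

lemma nabla_ext_add: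
  assumes f: "Hom (Suc n) f" and g: "Hom (Suc n) g"
  shows "nabla n (\<lambda>x. f x + g x) = (\<lambda>x. nabla n f x + nabla n g x)"
proof
  fix w
  show "nabla n (\<lambda>x. f x + g x) w = nabla n f w + nabla n g w"
  proof (cases "w \<in> Om n")
    case w: True
    have "Hom 1 (hcomp Om 1 f w)" "Hom 1 (hcomp Om 1 g w)"
      using hom_hcomp[of n 1] f g w by simp_all
    with f g w show ?thesis
      by (simp add: nabla_ext_apply hom_plus hcomp_plus nabla0_add sgnm_add)
  qed (simp add: nabla_ext_out)
qed

lemma nabla_ext_sgnm:
  assumes f: "Hom (Suc n) f"
  shows "nabla n (\<lambda>x. sgnm p (f x)) = (\<lambda>x. sgnm p (nabla n f x))"
proof
  fix w
  show "nabla n (\<lambda>x. sgnm p (f x)) w = sgnm p (nabla n f w)"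
  proof (cases "w \<in> Om n")
    case w: True
    have "Hom 1 (hcomp Om 1 f w)"
      using hom_hcomp[of n 1] f w by simp
    with f w show ?thesis
      by (simp add: nabla_ext_apply hom_sgnm hcomp_sgnm nabla0_sgnm sgnm_add sgnm_diff sgnm_sgnm add.commute)
  qed (simp add: nabla_ext_out)
qed

lemma hcomp_nabla_ext:
  assumes f: "Hom (Suc (j + k)) f" and w: "w \<in> Om j"
  shows "hcomp Om k (nabla (j + k) f) w =
           (\<lambda>x. nabla k (hcomp Om (Suc k) f w) x + sgnm (Suc (j + k)) (hcomp Om k f (d w) x))"
proof
  fix x
  show "hcomp Om k (nabla (j + k) f) w x =
          nabla k (hcomp Om (Suc k) f w) x + sgnm (Suc (j + k)) (hcomp Om k f (d w) x)"
  proof (cases "x \<in> Om k")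
    case x: True
    have fw: "Hom (Suc k) (hcomp Om (Suc k) f w)"
      using hom_hcomp[of j "Suc k"] f w by simp
    have wx: "w * x \<in> Om (j + k)"
      using Om_mult[OF w x] .
    have dwx: "d w * x \<in> Om (Suc (j + k))" and wdx: "w * d x \<in> Om (Suc (j + k))"
      using Om_mult[OF d_Om[OF w] x] Om_mult[OF w d_Om[OF x]] by simp_all
    have "f (d (w * x)) = f (d w * x) + sgnm j (f (w * d x))"
      using d_mult[OF w] hom_add[OF f dwx Om_sign_mult[OF wdx]] hom_sign_mult[OF f wdx] by simp
    moreover have "hcomp Om 1 (hcomp Om (Suc k) f w) x = hcomp Om 1 f (w * x)"
      using hcomp_hcomp[of x k 1 f w] x by simp
    moreover have "sgnm (Suc (j + k)) (sgnm j y) = sgnm (Suc k) y" for y :: 'm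
      by (simp add: sgnm_sgnm sgnm_def)
    ultimately show ?thesis
      using f fw x wx d_Om[OF x] by (simp add: nabla_ext_apply hcomp_def sgnm_add)
  qed (simp add: hcomp_def nabla_ext_out)
qed

lemma nabla_ext_hcomp_Om0:
  assumes f: "Hom (Suc k) f" and a: "a \<in> Om 0"
  shows "nabla k (hcomp Om (Suc k) f a) =
           (\<lambda>x. hcomp Om k (nabla k f) a x + sgnm k (hcomp Om k f (d a) x))"
  using hcomp_nabla_ext[of 0 k f a] f a by (simp add: fun_eq_iff)

lemma hcomp_nabla_ext_closed:
  assumes f: "Hom (Suc (Suc k)) f" and b: "b \<in> Om 1" and "d b = 0"
  shows "hcomp Om k (nabla (Suc k) f) b = nabla k (hcomp Om (Suc k) f b)"
  using hcomp_nabla_ext[of 1 k f b] hcomp_zero[OF f] assms by simp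

lemma nabla_ext_hom:
  assumes f: "Hom (Suc n) f"
  shows "Hom n (nabla n f)"
  unfolding hom_def
proof (intro conjI ballI allI impI)
  fix x y
  assume x: "x \<in> Om n" and y: "y \<in> Om n"
  have "Hom 1 (hcomp Om 1 f x)" "Hom 1 (hcomp Om 1 f y)"
    using hom_hcomp[of n 1] f x y by simp_all
  moreover have "hcomp Om 1 f (x + y) = (\<lambda>w. hcomp Om 1 f x w + hcomp Om 1 f y w)"
    using f Om_mult[OF x, of _ 1] Om_mult[OF y, of _ 1]
    by (auto simp: hcomp_def fun_eq_iff distrib_right hom_add)
  ultimately show "nabla n f (x + y) = nabla n f x + nabla n f y"
    using f x y d_Om[OF x] d_Om[OF y]
    by (simp add: nabla_ext_apply Om_add d_add hom_add nabla0_add sgnm_add)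
next
  fix x a
  assume x: "x \<in> Om n" and a: "a \<in> Om 0"
  have "nabla n f (x * a) = hcomp Om 0 (nabla (n + 0) f) x a"
    using a by (simp add: hcomp_def)
  also have "\<dots> = act (nabla0 (hcomp Om 1 f x)) a + sgnm (Suc n) (f (d x * a))"
    using hcomp_nabla_ext[of n 0 f x] f x a by (simp add: hcomp_def nabla_ext.simps)
  also have "\<dots> = act (nabla n f x) a"
    using f x a d_Om[OF x] by (simp add: nabla_ext_apply hom_act act_add act_sgnm del: sgnm_Suc)
  finally show "nabla n f (x * a) = act (nabla n f x) a" .
qed (simp add: nabla_ext_out)

lemma nabla_ext_twice_hcomp_Om0:
  assumes f: "Hom (Suc (Suc m)) f" and a: "a \<in> Om 0"
  shows "nabla m (nabla (Suc m) (hcomp Om (Suc (Suc m)) f a)) =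
           hcomp Om m (nabla m (nabla (Suc m) f)) a"
proof -
  let ?g = "nabla (Suc m) f"
  have g: "Hom (Suc m) ?g"
    using nabla_ext_hom[OF f] .
  have da: "d a \<in> Om 1"
    using d_Om[OF a] by simp
  have ga: "Hom (Suc m) (hcomp Om (Suc m) ?g a)"
    using hom_hcomp[of 0 "Suc m"] g a by simp
  have fda: "Hom (Suc m) (hcomp Om (Suc m) f (d a))"
    using hom_hcomp[of 1 "Suc m"] f da by simp
  have "nabla m (nabla (Suc m) (hcomp Om (Suc (Suc m)) f a)) =
          nabla m (\<lambda>x. hcomp Om (Suc m) ?g a x + sgnm (Suc m) (hcomp Om (Suc m) f (d a) x))"
    using nabla_ext_hcomp_Om0[OF f a] by simp
  also have "\<dots> = (\<lambda>x. nabla m (hcomp Om (Suc m) ?g a) x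
                      + sgnm (Suc m) (nabla m (hcomp Om (Suc m) f (d a)) x))"
    by (simp only: nabla_ext_add[OF ga hom_sgnm[OF fda]] nabla_ext_sgnm[OF fda])
  also have "\<dots> = (\<lambda>x. hcomp Om m (nabla m ?g) a x + sgnm m (hcomp Om m ?g (d a) x)
                      + sgnm (Suc m) (hcomp Om m ?g (d a) x))"
    using nabla_ext_hcomp_Om0[OF g a] hcomp_nabla_ext_closed[OF f da] by simp
  also have "\<dots> = hcomp Om m (nabla m ?g) a"
    by simp
  finally show ?thesis .
qed

lemma nabla_ext_twice_eq_curv:
  assumes f: "Hom (Suc (Suc m)) f" and w: "w \<in> Om m"
  shows "nabla m (nabla (Suc m) f) w = curv Om d act nabla0 (hcomp Om 2 f w)"
proof -
  let ?g = "nabla (Suc m) f"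
  have dw: "d w \<in> Om (Suc m)"
    using d_Om[OF w] .
  have fw: "Hom 1 (nabla 1 (hcomp Om 2 f w))"
    using nabla_ext_hom[of 1] hom_hcomp[of m 2] f w by (simp add: numeral_2_eq_2)
  have fdw: "Hom 1 (hcomp Om 1 f (d w))"
    using hom_hcomp[of "Suc m" 1] f dw by simp
  have gw: "hcomp Om 1 ?g w = (\<lambda>x. nabla 1 (hcomp Om 2 f w) x + sgnm m (hcomp Om 1 f (d w) x))"
    using hcomp_nabla_ext[of m 1 f w] f w by (simp add: numeral_2_eq_2)
  have "nabla m ?g w = nabla0 (hcomp Om 1 ?g w) + sgnm (Suc m) (?g (d w))"
    using nabla_ext_apply[OF nabla_ext_hom[OF f] w] .
  also have "\<dots> = nabla0 (nabla 1 (hcomp Om 2 f w)) + sgnm m (nabla0 (hcomp Om 1 f (d w)))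
                   + sgnm (Suc m) (nabla0 (hcomp Om 1 f (d w)))"
    unfolding gw using nabla0_add[OF fw hom_sgnm[OF fdw]] nabla0_sgnm[OF fdw]
      nabla_ext_apply[OF f dw] f by simp
  also have "\<dots> = curv Om d act nabla0 (hcomp Om 2 f w)"
    by (simp add: curv_def)
  finally show ?thesis .
qed

end

theorem proposition3p3:
  fixes sw :: "'k::field \<Rightarrow> 'w::ring_1 \<Rightarrow> 'w"
    and Om :: "nat \<Rightarrow> 'w set"
    and d :: "'w \<Rightarrow> 'w"
    and act :: "'m::ab_group_add \<Rightarrow> 'w \<Rightarrow> 'm"
    and nabla0 :: "('w \<Rightarrow> 'm) \<Rightarrow> 'm"
    and n :: nat
  assumes hc: "hom_connection sw Om d act nabla0"
    and n: "n > 0"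
  shows "(\<forall>f. hom Om act (n + 1) f \<longrightarrow>
            hom Om act (n - 1) (nabla_ext Om d act nabla0 (n - 1) (nabla_ext Om d act nabla0 n f))) \<and>
         (\<forall>f g. hom Om act (n + 1) f \<longrightarrow> hom Om act (n + 1) g \<longrightarrow>
            nabla_ext Om d act nabla0 (n - 1) (nabla_ext Om d act nabla0 n (\<lambda>x. f x + g x)) =
            (\<lambda>x. nabla_ext Om d act nabla0 (n - 1) (nabla_ext Om d act nabla0 n f) x +
                 nabla_ext Om d act nabla0 (n - 1) (nabla_ext Om d act nabla0 n g) x)) \<and>
         (\<forall>f. hom Om act (n + 1) f \<longrightarrow> (\<forall>a\<in>Om 0.
            nabla_ext Om d act nabla0 (n - 1) (nabla_ext Om d act nabla0 n (hcomp Om (n + 1) f a)) =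
            hcomp Om (n - 1) (nabla_ext Om d act nabla0 (n - 1) (nabla_ext Om d act nabla0 n f)) a)) \<and>
         (\<forall>f. hom Om act (n + 1) f \<longrightarrow> (\<forall>w1\<in>Om (n - 1).
            nabla_ext Om d act nabla0 (n - 1) (nabla_ext Om d act nabla0 n f) w1 =
            curv Om d act nabla0 (Theta Om n f w1)))"
proof -
  interpret hom_conn sw Om d act nabla0
    using hc by unfold_locales
  obtain m where n_Suc: "n = Suc m"
    using n gr0_implies_Suc by blast
  have "Hom (Suc m) (nabla (Suc m) f) \<and> Hom m (nabla m (nabla (Suc m) f))"
    if "Hom (Suc (Suc m)) f" for f
    using nabla_ext_hom that by blast
  moreover have "nabla m (nabla (Suc m) (\<lambda>x. f x + g x)) =
                   (\<lambda>x. nabla m (nabla (Suc m) f) x + nabla m (nabla (Suc m) g) x)"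
    if "Hom (Suc (Suc m)) f" "Hom (Suc (Suc m)) g" for f g
    using that by (simp add: nabla_ext_add nabla_ext_hom)
  ultimately show ?thesis
    using nabla_ext_twice_hcomp_Om0 nabla_ext_twice_eq_curv
    by (simp add: n_Suc Theta_def)
qed

end
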